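(* Let $H=(V,\mathcal E)$ be a finite hypergraph with nonnegative hyperedge weights $w_e$ and total weight $W=\sum_e w_e$. For $K\subseteq V$ let $W(K)=\sum_{e\in\mathcal E:\,e\subseteq K}w_e$, and for $\lambda\ge0$ let $\Phi(K,\lambda)=|K|-\lambda W(K)$. Let $\tau\in[0,1]$ and consider the linear program \[\min \sum_{v\in V}x_v \quad\text{s.t.}\quad z_e\le x_v\ \ \forall e\in\mathcal E,\ \forall v\in e;\qquad \sum_{e}w_e z_e\ge \tau W;\qquad 0\le x_v,z_e\le 1.\] Then there exist $\lambda^*\ge0$ and vertex sets $S^-\subseteq S^+\subseteq V$ such that (1) both $S^-$ and $S^+$ minimize $\Phi(\cdot,\lambda^* )$ over all subsets of $V$, and (2) there is $\alpha\in[0,1]$ such that $x^*=(1-\alpha)\mathbf 1_{S^-}+\alpha\mathbf 1_{S^+}$, together with $z^*_e=(1-\alpha)\mathbf 1[e\subseteq S^-]+\alpha\mathbf 1[e\subseteq S^+]$, is an optimal solution of the linear program satisfying the constraint $\sum_e w_e z^*_e\ge\tau W$.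
   Context: $\mathbf 1_S$ denotes the indicator vector of $S\subseteq V$. *)

theory Defs
  imports Main "HOL-Library.Indicator_Function"
begin

definition hyp_weight :: "'a set set \<Rightarrow> ('a set \<Rightarrow> real) \<Rightarrow> 'a set \<Rightarrow> real" where
  "hyp_weight E w K = (\<Sum>e\<in>{e\<in>E. e \<subseteq> K}. w e)"

definition Phi :: "'a set set \<Rightarrow> ('a set \<Rightarrow> real) \<Rightarrow> 'a set \<Rightarrow> real \<Rightarrow> real" where
  "Phi E w K lam = real (card K) - lam * hyp_weight E w K"

definition lp_feasible ::
  "'a set \<Rightarrow> 'a set set \<Rightarrow> ('a set \<Rightarrow> real) \<Rightarrow> real \<Rightarrow> ('a \<Rightarrow> real) \<Rightarrow> ('a set \<Rightarrow> real) \<Rightarrow> bool" where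
  "lp_feasible V E w \<tau> x z \<longleftrightarrow>
     (\<forall>e\<in>E. \<forall>v\<in>e. z e \<le> x v) \<and>
     (\<Sum>e\<in>E. w e * z e) \<ge> \<tau> * (\<Sum>e\<in>E. w e) \<and>
     (\<forall>v\<in>V. 0 \<le> x v \<and> x v \<le> 1) \<and>
     (\<forall>e\<in>E. 0 \<le> z e \<and> z e \<le> 1)"

definition lp_optimal ::
  "'a set \<Rightarrow> 'a set set \<Rightarrow> ('a set \<Rightarrow> real) \<Rightarrow> real \<Rightarrow> ('a \<Rightarrow> real) \<Rightarrow> ('a set \<Rightarrow> real) \<Rightarrow> bool" where
  "lp_optimal V E w \<tau> x z \<longleftrightarrow>
     lp_feasible V E w \<tau> x z \<and>
     (\<forall>x' z'. lp_feasible V E w \<tau> x' z' \<longrightarrow> (\<Sum>v\<in>V. x v) \<le> (\<Sum>v\<in>V. x' v))"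

end

theory Submission
  imports Defs "HOL-Analysis.Henstock_Kurzweil_Integration"
begin

(* For lam >= 0 and any feasible (x, z), replace z_e by min (1, min_{v in e} x_v) and round
   at a uniform threshold t in [0,1]: the objective sum_v x_v - lam * sum_e w_e z_e is at least
   the average over t of Phi ({v. t <= x_v}, lam), hence at least min Phi (_, lam).  So a convex
   combination of two nested Phi (_, lam)-minimizers satisfying the weight constraint, with
   equality unless lam = 0, is optimal (complementary slackness).
   The multiplier is taken among the crossing points of the lines lam |-> Phi (K, lam) so that
   some minimizer has weight >= tau W and, unless lam = 0, another one has weight < tau W.  As
   Phi (_, lam) is submodular, their union and intersection are nested minimizers that still
   straddle tau W. *)

lemma finite_hyperedges:
  assumes "finite V" "\<forall>e\<in>E. e \<subseteq> V"
  shows "finite E"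
  using assms by (meson Pow_iff finite_Pow_iff finite_subset subsetI)

lemma hyp_weight_eq_sum:
  assumes "finite E"
  shows "hyp_weight E w K = (\<Sum>e\<in>E. if e \<subseteq> K then w e else 0)"
  unfolding hyp_weight_def using assms by (simp add: sum.inter_filter)

lemma hyp_weight_mono:
  assumes "finite E" "\<forall>e\<in>E. 0 \<le> w e" "K \<subseteq> K'"
  shows "hyp_weight E w K \<le> hyp_weight E w K'"
  unfolding hyp_weight_eq_sum[OF assms(1)] using assms by (intro sum_mono) auto

lemma hyp_weight_supermodular:
  assumes "finite E" "\<forall>e\<in>E. 0 \<le> w e"
  shows "hyp_weight E w A + hyp_weight E w B \<le> hyp_weight E w (A \<union> B) + hyp_weight E w (A \<inter> B)"
  unfolding hyp_weight_eq_sum[OF assms(1)] sum.distrib[symmetric]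
  using assms by (intro sum_mono) auto

lemma Phi_submodular:
  assumes "finite E" "\<forall>e\<in>E. 0 \<le> w e" "0 \<le> lam" "finite A" "finite B"
  shows "Phi E w (A \<union> B) lam + Phi E w (A \<inter> B) lam \<le> Phi E w A lam + Phi E w B lam"
proof -
  have "real (card (A \<union> B)) + real (card (A \<inter> B)) = real (card A) + real (card B)"
    using card_Un_Int[OF assms(4,5)] by simp
  moreover have "lam * (hyp_weight E w A + hyp_weight E w B)
      \<le> lam * (hyp_weight E w (A \<union> B) + hyp_weight E w (A \<inter> B))"
    using hyp_weight_supermodular[OF assms(1,2)] assms(3) by (rule mult_left_mono)
  ultimately show ?thesis unfolding Phi_def by (simp add: algebra_simps)
qed

definition Phi_minimizer :: "'a set \<Rightarrow> 'a set set \<Rightarrow> ('a set \<Rightarrow> real) \<Rightarrow> real \<Rightarrow> 'a set \<Rightarrow> bool" where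
  "Phi_minimizer V E w lam K \<longleftrightarrow> K \<subseteq> V \<and> (\<forall>K'\<subseteq>V. Phi E w K lam \<le> Phi E w K' lam)"

lemma Phi_minimizer_Un_Int:
  assumes "finite V" "finite E" "\<forall>e\<in>E. 0 \<le> w e" "0 \<le> lam"
    and A: "Phi_minimizer V E w lam A" and B: "Phi_minimizer V E w lam B"
  shows "Phi_minimizer V E w lam (A \<union> B)" and "Phi_minimizer V E w lam (A \<inter> B)"
proof -
  have AB: "A \<union> B \<subseteq> V" "A \<inter> B \<subseteq> V" and "finite A" "finite B"
    using assms(1) A B finite_subset unfolding Phi_minimizer_def by auto
  then have sub: "Phi E w (A \<union> B) lam + Phi E w (A \<inter> B) lam \<le> Phi E w A lam + Phi E w B lam"
    by (intro Phi_submodular assms(2-4))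
  have "Phi E w A lam \<le> Phi E w (A \<inter> B) lam" "Phi E w B lam \<le> Phi E w (A \<union> B) lam"
    using A B AB unfolding Phi_minimizer_def by blast+
  with sub have "Phi E w (A \<union> B) lam \<le> Phi E w B lam" "Phi E w (A \<inter> B) lam \<le> Phi E w A lam"
    by linarith+
  with A B AB show "Phi_minimizer V E w lam (A \<union> B)" "Phi_minimizer V E w lam (A \<inter> B)"
    unfolding Phi_minimizer_def by (blast intro: order_trans)+
qed

lemma exists_multiplier_minimizers_straddle:
  fixes a b :: "'k \<Rightarrow> real"
  assumes finF: "finite F" and K0: "K0 \<in> F" "\<theta> \<le> b K0"
  defines "minimizer lam K \<equiv> K \<in> F \<and> (\<forall>K'\<in>F. a K - lam * b K \<le> a K' - lam * b K')"
  shows "\<exists>lam\<ge>0. \<exists>KA. minimizer lam KA \<and> \<theta> \<le> b KA \<and>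
           (lam = 0 \<or> (\<exists>KB. minimizer lam KB \<and> b KB < \<theta>))"
proof -
  define A where "A = {K\<in>F. \<theta> \<le> b K}"
  define B where "B = {K\<in>F. b K < \<theta>}"
  \<comment> \<open>the multiplier at which the lines of \<open>K\<close> and \<open>K'\<close> cross\<close>
  define c where "c K K' = (a K - a K') / (b K - b K')" for K K'
  define r where "r K = Max (c K ` B)" for K
  \<comment> \<open>the least multiplier \<open>\<ge> 0\<close> at which some \<open>K \<in> A\<close> beats every \<open>K' \<in> B\<close>\<close>
  define lam where "lam = (if B = {} then 0 else max 0 (Min (r ` A)))"
  have finA: "finite A" and finB: "finite B" and K0A: "K0 \<in> A"
    unfolding A_def B_def using finF K0 by auto
  have lam0: "0 \<le> lam" unfolding lam_def by auto
  have cross: "a K - lam * b K \<le> a K' - lam * b K'"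
    if "K \<in> A" "K' \<in> B" "c K K' \<le> lam" for K K'
  proof -
    have "b K' < b K" using that unfolding A_def B_def by auto
    then show ?thesis using that(3) unfolding c_def by (simp add: divide_le_eq algebra_simps)
  qed
  obtain G where G: "minimizer lam G"
    using ex_is_arg_min_if_finite[OF finF, of "\<lambda>K. a K - lam * b K"] K0
    unfolding minimizer_def is_arg_min_linorder by blast
  obtain KA where KA: "minimizer lam KA" "KA \<in> A"
  proof (cases "G \<in> A")
    case True
    then show ?thesis using that G by blast
  next
    case False
    then have GB: "G \<in> B" using G unfolding minimizer_def A_def B_def by auto
    obtain K1 where K1: "K1 \<in> A" "r K1 = Min (r ` A)"
    proof -
      have "Min (r ` A) \<in> r ` A" using finA K0A by (intro Min_in) auto
      then show ?thesis using that by auto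
    qed
    have "c K1 G \<le> r K1" unfolding r_def using finB GB by (intro Max_ge) auto
    also have "r K1 \<le> lam" unfolding lam_def using GB K1 by auto
    finally have "minimizer lam K1"
      using cross[OF K1(1) GB] G K1(1) unfolding minimizer_def A_def by force
    then show ?thesis using that K1(1) by blast
  qed
  have "lam = 0" if none: "\<not> (\<exists>KB. minimizer lam KB \<and> b KB < \<theta>)"
  proof (rule ccontr)
    assume "lam \<noteq> 0"
    then have Bne: "B \<noteq> {}" and lam_eq: "lam = Min (r ` A)"
      unfolding lam_def by (auto split: if_splits)
    have "c KA K' < lam" if K': "K' \<in> B" for K'
    proof -
      have "\<not> minimizer lam K'" using none K' unfolding B_def by auto
      then have "a KA - lam * b KA < a K' - lam * b K'"
        using KA(1) K' unfolding minimizer_def B_def by force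
      moreover have "b K' < b KA" using K' KA(2) unfolding A_def B_def by auto
      ultimately show ?thesis unfolding c_def by (simp add: divide_less_eq algebra_simps)
    qed
    then have "r KA < lam" unfolding r_def using finB Bne by (subst Max_less_iff) auto
    moreover have "lam \<le> r KA" unfolding lam_eq using finA KA(2) by auto
    ultimately show False by simp
  qed
  then show ?thesis using lam0 KA unfolding A_def by blast
qed

lemma exists_Phi_minimizers_straddling:
  assumes fV: "finite V" and finE: "finite E" and w0: "\<forall>e\<in>E. 0 \<le> w e"
    and "\<theta> \<le> hyp_weight E w V"
  obtains lam Sm Sp where "0 \<le> lam" "Sm \<subseteq> Sp"
    "Phi_minimizer V E w lam Sm" "Phi_minimizer V E w lam Sp" "\<theta> \<le> hyp_weight E w Sp"
    "lam = 0 \<or> hyp_weight E w Sm < \<theta>"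
proof -
  have minimizer_iff: "(K \<in> Pow V \<and> (\<forall>K'\<in>Pow V. real (card K) - lam * hyp_weight E w K
        \<le> real (card K') - lam * hyp_weight E w K')) \<longleftrightarrow> Phi_minimizer V E w lam K" for lam K
    unfolding Phi_minimizer_def Phi_def by auto
  obtain lam KA where lam0: "0 \<le> lam" and KA: "Phi_minimizer V E w lam KA" "\<theta> \<le> hyp_weight E w KA"
    and KB: "lam = 0 \<or> (\<exists>KB. Phi_minimizer V E w lam KB \<and> hyp_weight E w KB < \<theta>)"
    using exists_multiplier_minimizers_straddle[of "Pow V" V \<theta> "hyp_weight E w" "\<lambda>K. real (card K)"]
      fV assms(4) unfolding minimizer_iff by blast
  show ?thesis
  proof (cases "lam = 0")
    case True
    then show ?thesis using that[of lam KA KA] lam0 KA by blast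
  next
    case False
    then obtain KB where KB: "Phi_minimizer V E w lam KB" "hyp_weight E w KB < \<theta>" using KB by blast
    have "\<theta> \<le> hyp_weight E w (KA \<union> KB)"
      using KA(2) hyp_weight_mono[OF finE w0, of KA "KA \<union> KB"] by simp
    moreover have "hyp_weight E w (KA \<inter> KB) < \<theta>"
      using KB(2) hyp_weight_mono[OF finE w0, of "KA \<inter> KB" KB] by simp
    ultimately show ?thesis
      using that[of lam "KA \<inter> KB" "KA \<union> KB"] lam0
        Phi_minimizer_Un_Int[OF fV finE w0 lam0 KA(1) KB(1)] by blast
  qed
qed

lemma has_integral_threshold_indicator:
  fixes a :: real
  assumes "0 \<le> a" "a \<le> 1"
  shows "((\<lambda>t. if t \<le> a then 1 else 0) has_integral a) {0..1}"
proof -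
  have "((\<lambda>t. 1::real) has_integral a) (cbox 0 a)"
    using has_integral_const_real[of "1::real" 0 a] assms by simp
  then have "((\<lambda>t. if t \<in> {0..a} then 1 else 0::real) has_integral a) {0..1}"
    using has_integral_restrict_closed_subintervals_eq[of 0 a 0 1 "\<lambda>t. 1::real" a] assms by simp
  then show ?thesis
    by (rule has_integral_eq[rotated]) auto
qed

lemma has_integral_Phi_level_sets:
  assumes fV: "finite V" and EV: "\<forall>e\<in>E. e \<subseteq> V" and x01: "\<forall>v\<in>V. 0 \<le> x v \<and> x v \<le> 1"
  shows "((\<lambda>t. Phi E w {v\<in>V. t \<le> x v} lam) has_integral
           (\<Sum>v\<in>V. x v) - lam * (\<Sum>e\<in>E. w e * Min (insert 1 (x ` e)))) {0..1}"
proof -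
  have finE: "finite E" using fV EV by (rule finite_hyperedges)
  define mn where "mn e = Min (insert 1 (x ` e))" for e
  have le_mn: "t \<le> mn e \<longleftrightarrow> e \<subseteq> {v\<in>V. t \<le> x v}" if "e \<in> E" "t \<le> 1" for e t
  proof -
    have "finite e" using EV fV that(1) finite_subset by blast
    then have "t \<le> mn e \<longleftrightarrow> (\<forall>v\<in>e. t \<le> x v)" using that(2) unfolding mn_def by (simp add: Min_ge_iff)
    then show ?thesis using EV that(1) by auto
  qed
  have mn01: "0 \<le> mn e \<and> mn e \<le> 1" if "e \<in> E" for e
  proof
    show "0 \<le> mn e" using le_mn[OF that, of 0] x01 EV that by auto
    have "finite e" using EV fV that finite_subset by blast
    then show "mn e \<le> 1" unfolding mn_def by simp
  qed
  define h where "h t = (\<Sum>v\<in>V. if t \<le> x v then 1 else 0)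
      - lam * (\<Sum>e\<in>E. w e * (if t \<le> mn e then 1 else 0))" for t :: real
  have "(h has_integral (\<Sum>v\<in>V. x v) - lam * (\<Sum>e\<in>E. w e * mn e)) {0..1}"
    unfolding h_def using x01 mn01
    by (intro has_integral_diff has_integral_mult_right has_integral_sum fV finE
        has_integral_threshold_indicator) auto
  moreover have "h t = Phi E w {v\<in>V. t \<le> x v} lam" if "t \<in> {0..1}" for t
  proof -
    have "(\<Sum>v\<in>V. if t \<le> x v then 1 else 0) = real (card {v\<in>V. t \<le> x v})"
      using fV by (simp add: sum.If_cases Int_def)
    moreover have "(\<Sum>e\<in>E. w e * (if t \<le> mn e then 1 else 0)) = hyp_weight E w {v\<in>V. t \<le> x v}"
      unfolding hyp_weight_eq_sum[OF finE] using le_mn that by (intro sum.cong) auto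
    ultimately show ?thesis unfolding h_def Phi_def by simp
  qed
  ultimately show ?thesis unfolding mn_def by (rule has_integral_eq[rotated]) simp
qed

lemma Phi_minimizer_le_lagrangian:
  assumes fV: "finite V" and EV: "\<forall>e\<in>E. e \<subseteq> V" and w0: "\<forall>e\<in>E. 0 \<le> w e" and lam0: "0 \<le> lam"
    and S: "Phi_minimizer V E w lam S" and feas: "lp_feasible V E w \<tau> x z"
  shows "Phi E w S lam \<le> (\<Sum>v\<in>V. x v) - lam * (\<Sum>e\<in>E. w e * z e)"
proof -
  have x01: "\<forall>v\<in>V. 0 \<le> x v \<and> x v \<le> 1" using feas unfolding lp_feasible_def by blast
  have "z e \<le> Min (insert 1 (x ` e))" if "e \<in> E" for e
  proof -
    have "finite e" using EV fV that finite_subset by blast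
    then show ?thesis using feas that unfolding lp_feasible_def by (simp add: Min_ge_iff)
  qed
  then have "(\<Sum>e\<in>E. w e * z e) \<le> (\<Sum>e\<in>E. w e * Min (insert 1 (x ` e)))"
    using w0 by (intro sum_mono mult_left_mono) auto
  then have "(\<Sum>v\<in>V. x v) - lam * (\<Sum>e\<in>E. w e * Min (insert 1 (x ` e)))
      \<le> (\<Sum>v\<in>V. x v) - lam * (\<Sum>e\<in>E. w e * z e)"
    using lam0 by (simp add: mult_left_mono)
  moreover have "Phi E w S lam \<le> (\<Sum>v\<in>V. x v) - lam * (\<Sum>e\<in>E. w e * Min (insert 1 (x ` e)))"
  proof (rule has_integral_le)
    show "((\<lambda>t. Phi E w S lam) has_integral Phi E w S lam) {0..1::real}"
      using has_integral_const_real[of "Phi E w S lam" 0 1] by simp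
    show "((\<lambda>t. Phi E w {v\<in>V. t \<le> x v} lam) has_integral
            (\<Sum>v\<in>V. x v) - lam * (\<Sum>e\<in>E. w e * Min (insert 1 (x ` e)))) {0..1}"
      by (rule has_integral_Phi_level_sets[OF fV EV x01])
    show "Phi E w S lam \<le> Phi E w {v\<in>V. t \<le> x v} lam" for t
      using S unfolding Phi_minimizer_def by auto
  qed
  ultimately show ?thesis by linarith
qed

lemma lp_optimal_convex_combination:
  assumes fV: "finite V" and EV: "\<forall>e\<in>E. e \<subseteq> V" and w0: "\<forall>e\<in>E. 0 \<le> w e" and lam0: "0 \<le> lam"
    and Sm: "Phi_minimizer V E w lam Sm" and Sp: "Phi_minimizer V E w lam Sp" and nested: "Sm \<subseteq> Sp"
    and \<alpha>: "0 \<le> \<alpha>" "\<alpha> \<le> 1"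
    and cover: "\<tau> * (\<Sum>e\<in>E. w e) \<le> (1 - \<alpha>) * hyp_weight E w Sm + \<alpha> * hyp_weight E w Sp"
    and slack: "lam = 0 \<or> (1 - \<alpha>) * hyp_weight E w Sm + \<alpha> * hyp_weight E w Sp = \<tau> * (\<Sum>e\<in>E. w e)"
  shows "lp_optimal V E w \<tau>
           (\<lambda>v. (1 - \<alpha>) * indicator Sm v + \<alpha> * indicator Sp v)
           (\<lambda>e. (1 - \<alpha>) * (if e \<subseteq> Sm then 1 else 0) + \<alpha> * (if e \<subseteq> Sp then 1 else 0))"
proof -
  have finE: "finite E" using fV EV by (rule finite_hyperedges)
  let ?x = "\<lambda>v. (1 - \<alpha>) * indicator Sm v + \<alpha> * indicator Sp v"
  let ?z = "\<lambda>e. (1 - \<alpha>) * (if e \<subseteq> Sm then 1 else 0) + \<alpha> * (if e \<subseteq> Sp then 1 else 0::real)"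
  let ?Wz = "(1 - \<alpha>) * hyp_weight E w Sm + \<alpha> * hyp_weight E w Sp"
  have wz: "(\<Sum>e\<in>E. w e * ?z e) = ?Wz"
    unfolding hyp_weight_eq_sum[OF finE] sum_distrib_left sum.distrib[symmetric]
    by (rule sum.cong) (auto simp: algebra_simps)
  have card: "(\<Sum>v\<in>V. indicator S v) = real (card S)" if "S \<subseteq> V" for S
    using fV that by (simp add: indicator_def sum.If_cases Int_absorb1)
  have "(\<Sum>v\<in>V. ?x v) = (1 - \<alpha>) * card Sm + \<alpha> * card Sp"
    using Sm Sp unfolding Phi_minimizer_def
    by (simp add: sum.distrib sum_distrib_left[symmetric] card)
  also have "\<dots> = Phi E w Sm lam + lam * ?Wz"
  proof -
    have "Phi E w Sp lam = Phi E w Sm lam" using Sm Sp unfolding Phi_minimizer_def by (simp add: eq_iff)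
    then have "real (card Sm) = Phi E w Sm lam + lam * hyp_weight E w Sm"
      "real (card Sp) = Phi E w Sm lam + lam * hyp_weight E w Sp"
      unfolding Phi_def by simp_all
    then show ?thesis by (simp add: algebra_simps)
  qed
  finally have val: "(\<Sum>v\<in>V. ?x v) = Phi E w Sm lam + lam * ?Wz" .
  have feas: "lp_feasible V E w \<tau> ?x ?z"
    unfolding lp_feasible_def wz using nested \<alpha> cover by (auto simp: indicator_def)
  show ?thesis unfolding lp_optimal_def
  proof (intro conjI feas allI impI)
    fix x' z' assume feas': "lp_feasible V E w \<tau> x' z'"
    then have "lam * ?Wz \<le> lam * (\<Sum>e\<in>E. w e * z' e)"
      using slack lam0 unfolding lp_feasible_def by (auto intro: mult_left_mono)
    then show "(\<Sum>v\<in>V. ?x v) \<le> (\<Sum>v\<in>V. x' v)"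
      using Phi_minimizer_le_lagrangian[OF fV EV w0 lam0 Sm feas'] unfolding val by linarith
  qed
qed

lemma exists_convex_weight_slack:
  fixes p q \<theta> lam :: real
  assumes "\<theta> \<le> q" and "lam = 0 \<or> p < \<theta>"
  obtains \<alpha> where "0 \<le> \<alpha>" "\<alpha> \<le> 1" "\<theta> \<le> (1 - \<alpha>) * p + \<alpha> * q"
    "lam = 0 \<or> (1 - \<alpha>) * p + \<alpha> * q = \<theta>"
proof (cases "p < \<theta>")
  case True
  define \<alpha> where "\<alpha> = (\<theta> - p) / (q - p)"
  have "\<alpha> * (q - p) = \<theta> - p" using True assms(1) by (simp add: \<alpha>_def)
  then have "(1 - \<alpha>) * p + \<alpha> * q = \<theta>" by (simp add: algebra_simps)
  moreover have "0 \<le> \<alpha>" "\<alpha> \<le> 1" using True assms(1) by (auto simp: \<alpha>_def)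
  ultimately show ?thesis using that by simp
next
  case False
  then show ?thesis using assms that[of 1] by simp
qed

theorem lemma4:
  fixes V :: "'a set" and E :: "'a set set" and w :: "'a set \<Rightarrow> real" and \<tau> :: real
  assumes "finite V"
    and "\<forall>e\<in>E. e \<subseteq> V"
    and "\<forall>e\<in>E. 0 \<le> w e"
    and "0 \<le> \<tau>" and "\<tau> \<le> 1"
  shows "\<exists>lam::real. \<exists>Sm Sp. 0 \<le> lam \<and> Sm \<subseteq> Sp \<and> Sp \<subseteq> V \<and>
           (\<forall>K\<subseteq>V. Phi E w Sm lam \<le> Phi E w K lam) \<and>
           (\<forall>K\<subseteq>V. Phi E w Sp lam \<le> Phi E w K lam) \<and>
           (\<exists>\<alpha>::real. 0 \<le> \<alpha> \<and> \<alpha> \<le> 1 \<and>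
              lp_optimal V E w \<tau>
                (\<lambda>v. (1 - \<alpha>) * indicator Sm v + \<alpha> * indicator Sp v)
                (\<lambda>e. (1 - \<alpha>) * (if e \<subseteq> Sm then 1 else 0) + \<alpha> * (if e \<subseteq> Sp then 1 else 0)))"
proof -
  let ?W = "\<Sum>e\<in>E. w e"
  have finE: "finite E" using assms(1,2) by (rule finite_hyperedges)
  have "hyp_weight E w V = ?W"
    unfolding hyp_weight_def using assms(2) by (intro sum.cong) auto
  then have "\<tau> * ?W \<le> hyp_weight E w V"
    using assms(3-5) by (simp add: sum_nonneg mult_left_le_one_le)
  then obtain lam Sm Sp where lam0: "0 \<le> lam" and "Sm \<subseteq> Sp"
    and Sm: "Phi_minimizer V E w lam Sm" and Sp: "Phi_minimizer V E w lam Sp"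
    and Sp_heavy: "\<tau> * ?W \<le> hyp_weight E w Sp"
    and Sm_light: "lam = 0 \<or> hyp_weight E w Sm < \<tau> * ?W"
    by (rule exists_Phi_minimizers_straddling[OF assms(1) finE assms(3)])
  obtain \<alpha> where \<alpha>: "0 \<le> \<alpha>" "\<alpha> \<le> 1"
    and cover: "\<tau> * ?W \<le> (1 - \<alpha>) * hyp_weight E w Sm + \<alpha> * hyp_weight E w Sp"
    and slack: "lam = 0 \<or> (1 - \<alpha>) * hyp_weight E w Sm + \<alpha> * hyp_weight E w Sp = \<tau> * ?W"
    by (rule exists_convex_weight_slack[OF Sp_heavy Sm_light])
  have "lp_optimal V E w \<tau>
          (\<lambda>v. (1 - \<alpha>) * indicator Sm v + \<alpha> * indicator Sp v)
          (\<lambda>e. (1 - \<alpha>) * (if e \<subseteq> Sm then 1 else 0) + \<alpha> * (if e \<subseteq> Sp then 1 else 0))"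
    by (rule lp_optimal_convex_combination[OF assms(1-3) lam0 Sm Sp \<open>Sm \<subseteq> Sp\<close> \<alpha> cover slack])
  moreover have "Sp \<subseteq> V" "\<forall>K\<subseteq>V. Phi E w Sm lam \<le> Phi E w K lam" "\<forall>K\<subseteq>V. Phi E w Sp lam \<le> Phi E w K lam"
    using Sm Sp unfolding Phi_minimizer_def by blast+
  ultimately show ?thesis using lam0 \<open>Sm \<subseteq> Sp\<close> \<alpha> by blast
qed

end
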